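(* Let ${\bf L}\in\mathbb{S}^d_{+}$ and let ${\bf S}$ be a random matrix with values in $\mathbb{S}^d_+$ and $\mathbb{E}[{\bf S}]={\bf I}_d$ (with finite second moments). Then the optimization problem $$\text{minimize } \log\det({\bf D}^{-1})\quad\text{subject to}\quad \mathbb{E}[{\bf S}{\bf D}{\bf L}{\bf D}{\bf S}]\preceq{\bf D},\quad {\bf D}\in\mathbb{S}^d_{++}$$ is a convex optimization problem with a convex constraint; in particular the set $\{{\bf D}\in\mathbb{S}^d_{++}:\mathbb{E}[{\bf S}{\bf D}{\bf L}{\bf D}{\bf S}]\preceq{\bf D}\}$ is convex.
   Context: $\mathbb{S}^d_{+}$ (resp. $\mathbb{S}^d_{++}$) denotes the set of $d\times d$ symmetric positive semidefinite (resp. positive definite) matrices; $\preceq$ is the Loewner order. *)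

theory Defs
  imports "HOL-Probability.Probability"
begin

definition psd_mat :: "real^'n^'n \<Rightarrow> bool" where
  "psd_mat A \<longleftrightarrow> transpose A = A \<and> (\<forall>x. 0 \<le> x \<bullet> (A *v x))"

definition pd_mat :: "real^'n^'n \<Rightarrow> bool" where
  "pd_mat A \<longleftrightarrow> transpose A = A \<and> (\<forall>x. x \<noteq> 0 \<longrightarrow> 0 < x \<bullet> (A *v x))"

definition loewner_le :: "real^'n^'n \<Rightarrow> real^'n^'n \<Rightarrow> bool" where
  "loewner_le A B \<longleftrightarrow> psd_mat (B - A)"

end

theory Submission
  imports Defs
begin

(* ln det (D^-1) = - ln det D, and ln det is concave on positive definite matrices: a congruence P
   with P^T A P = I and P^T B P = diag(beta) turns det (u A + v B) into det A * prod (u + v beta_i),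
   so the inequality reduces to the concavity of ln in each generalized eigenvalue beta_i. The
   congruence is built one column at a time, each new column maximizing the Rayleigh quotient
   x^T B x / x^T A x on the A-orthogonal complement of the previous ones.
   For the constraint, z^T D L D z = (D z)^T L (D z) is a convex quadratic form of D z, which is
   linear in D, so D |-> D L D is convex in the Loewner order; K |-> E[S K S] is linear and
   preserves the order, so D |-> E[S D L D S] - D is Loewner-convex and its sublevel set
   {E[S D L D S] <= D} is convex. *)

lemma matrix_add_rdistrib: "(A + B) ** C = A ** C + B ** (C :: 'a::semiring_1^'p^'n)"
  by (vector matrix_matrix_mult_def sum.distrib[symmetric] field_simps)

lemma inner_matrix_vector_mult_symmetric:
  fixes A :: "real^'n^'n"
  assumes "transpose A = A"
  shows "x \<bullet> (A *v y) = y \<bullet> (A *v x)"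
  by (metis assms dot_lmul_matrix inner_commute transpose_matrix_vector)

lemma continuous_on_quadratic_form: "continuous_on S (\<lambda>x. x \<bullet> ((A::real^'n^'n) *v x))"
  by (intro continuous_intros)

lemma quadratic_form_scaleR:
  "(a *\<^sub>R x) \<bullet> ((A::real^'n^'n) *v (a *\<^sub>R x)) = a\<^sup>2 * (x \<bullet> (A *v x))"
  by (simp add: matrix_vector_mult_scaleR power2_eq_square)

lemma quadratic_form_add:
  fixes A :: "real^'n^'n"
  assumes "transpose A = A"
  shows "(x + y) \<bullet> (A *v (x + y)) = x \<bullet> (A *v x) + 2 * (y \<bullet> (A *v x)) + y \<bullet> (A *v y)"
  using inner_matrix_vector_mult_symmetric[OF assms, of x y]
  by (simp add: matrix_vector_right_distrib inner_add_left inner_add_right)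

lemma quadratic_form_matrix_combination:
  "x \<bullet> ((u *\<^sub>R A + v *\<^sub>R B) *v x) = u * (x \<bullet> (A *v x)) + v * (x \<bullet> ((B::real^'n^'n) *v x))"
  by (simp add: matrix_vector_mult_add_rdistrib inner_add_right scaleR_matrix_vector_assoc[symmetric])

lemma quadratic_form_congruence:
  fixes S K :: "real^'n^'n"
  assumes "transpose S = S"
  shows "x \<bullet> ((S ** K ** S) *v x) = (S *v x) \<bullet> (K *v (S *v x))"
  using inner_matrix_vector_mult_symmetric[OF assms, of x "K *v (S *v x)"]
  by (simp add: matrix_vector_mul_assoc matrix_mul_assoc inner_commute)

lemma transpose_congruence:
  fixes S K :: "real^'n^'n"
  assumes "transpose S = S" "transpose K = K"
  shows "transpose (S ** K ** S) = S ** K ** S"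
  using assms by (simp add: matrix_transpose_mul matrix_mul_assoc)

lemma congruence_nth:
  "(transpose P ** X ** P) $ i $ j = column i P \<bullet> ((X::real^'n^'n) *v column j P)"
  by (simp add: matrix_matrix_mult_def matrix_vector_mult_def inner_vec_def column_def transpose_def
      sum_distrib_left sum_distrib_right mult.assoc mult.left_commute) (rule sum.swap)

lemma psd_quadratic_form_convex:
  fixes L :: "real^'n^'n"
  assumes L: "psd_mat L" and u: "u \<ge> 0" and v: "v \<ge> 0" and uv: "u + v = 1"
  shows "(u *\<^sub>R a + v *\<^sub>R b) \<bullet> (L *v (u *\<^sub>R a + v *\<^sub>R b))
    \<le> u * (a \<bullet> (L *v a)) + v * (b \<bullet> (L *v b))"
proof -
  have sym: "transpose L = L" using L by (simp add: psd_mat_def)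
  have "0 \<le> (a - b) \<bullet> (L *v (a - b))" using L by (simp add: psd_mat_def)
  then have "0 \<le> u * v * ((a - b) \<bullet> (L *v (a - b)))" using u v by simp
  moreover have u_eq: "u = 1 - v" using uv by simp
  ultimately show ?thesis
    using inner_matrix_vector_mult_symmetric[OF sym, of a b] unfolding u_eq
    by (simp add: algebra_simps power2_eq_square)
qed

lemma quadratic_form_sandwich_convex:
  fixes A B L :: "real^'n^'n"
  assumes L: "psd_mat L" and A: "transpose A = A" and B: "transpose B = B"
    and u: "u \<ge> 0" and v: "v \<ge> 0" and uv: "u + v = 1"
  shows "z \<bullet> (((u *\<^sub>R A + v *\<^sub>R B) ** L ** (u *\<^sub>R A + v *\<^sub>R B)) *v z)
    \<le> u * (z \<bullet> ((A ** L ** A) *v z)) + v * (z \<bullet> ((B ** L ** B) *v z))"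
proof -
  have "transpose (u *\<^sub>R A + v *\<^sub>R B) = u *\<^sub>R A + v *\<^sub>R B"
    using A B by (simp add: transpose_def vec_eq_iff)
  then have "z \<bullet> (((u *\<^sub>R A + v *\<^sub>R B) ** L ** (u *\<^sub>R A + v *\<^sub>R B)) *v z)
      = (u *\<^sub>R (A *v z) + v *\<^sub>R (B *v z)) \<bullet> (L *v (u *\<^sub>R (A *v z) + v *\<^sub>R (B *v z)))"
    by (simp add: quadratic_form_congruence matrix_vector_mult_add_rdistrib
        scaleR_matrix_vector_assoc[symmetric])
  also have "\<dots> \<le> u * ((A *v z) \<bullet> (L *v (A *v z))) + v * ((B *v z) \<bullet> (L *v (B *v z)))"
    by (rule psd_quadratic_form_convex[OF L u v uv])
  also have "\<dots> = u * (z \<bullet> ((A ** L ** A) *v z)) + v * (z \<bullet> ((B ** L ** B) *v z))"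
    by (simp add: quadratic_form_congruence[OF A] quadratic_form_congruence[OF B])
  finally show ?thesis .
qed

lemma loewner_le_iff_quadratic_form:
  fixes X Y :: "real^'n^'n"
  assumes "transpose X = X" "transpose Y = Y"
  shows "loewner_le X Y \<longleftrightarrow> (\<forall>x. x \<bullet> (X *v x) \<le> x \<bullet> (Y *v x))"
proof -
  have "transpose (Y - X) = Y - X" using assms by (simp add: transpose_def vec_eq_iff)
  then show ?thesis
    by (simp add: loewner_le_def psd_mat_def matrix_vector_mult_diff_rdistrib inner_diff_right)
qed

lemma pd_mat_coercive:
  fixes A :: "real^'n^'n"
  assumes "pd_mat A"
  obtains c where "c > 0" "\<And>x. c * (norm x)\<^sup>2 \<le> x \<bullet> (A *v x)"
proof -
  have "sphere (0::real^'n) 1 \<noteq> {}" by simp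
  then obtain v where v: "v \<in> sphere 0 1" and min: "\<forall>y\<in>sphere 0 1. v \<bullet> (A *v v) \<le> y \<bullet> (A *v y)"
    using continuous_attains_inf[OF compact_sphere _ continuous_on_quadratic_form[of _ A]] by blast
  have "v \<bullet> (A *v v) * (norm x)\<^sup>2 \<le> x \<bullet> (A *v x)" for x
  proof (cases "x = 0")
    case False
    then have "inverse (norm x) *\<^sub>R x \<in> sphere 0 1" by simp
    then have "v \<bullet> (A *v v) \<le> (inverse (norm x))\<^sup>2 * (x \<bullet> (A *v x))"
      using min quadratic_form_scaleR by metis
    with False show ?thesis by (simp add: field_simps power2_eq_square)
  qed simp
  moreover have "v \<noteq> 0" using v by auto
  then have "v \<bullet> (A *v v) > 0" using assms unfolding pd_mat_def by blast
  ultimately show ?thesis using that by blast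
qed

lemma convex_pd_mat: "convex {D :: real^'n^'n. pd_mat D}"
proof (rule convexI)
  fix A B :: "real^'n^'n" and u v :: real
  assume A: "A \<in> {D. pd_mat D}" and B: "B \<in> {D. pd_mat D}"
    and u: "0 \<le> u" and v: "0 \<le> v" and uv: "u + v = 1"
  have "0 < u * (x \<bullet> (A *v x)) + v * (x \<bullet> (B *v x))" if "x \<noteq> 0" for x
  proof -
    have "x \<bullet> (A *v x) > 0" "x \<bullet> (B *v x) > 0" using A B that by (auto simp: pd_mat_def)
    then show ?thesis using u v uv
      by (cases "u = 0") (auto intro: add_pos_nonneg)
  qed
  moreover have "transpose (u *\<^sub>R A + v *\<^sub>R B) = u *\<^sub>R A + v *\<^sub>R B"
    using A B by (simp add: pd_mat_def transpose_def vec_eq_iff)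
  ultimately show "u *\<^sub>R A + v *\<^sub>R B \<in> {D. pd_mat D}"
    by (simp add: pd_mat_def quadratic_form_matrix_combination)
qed

lemma linear_le_quadratic_imp_eq_0:
  fixes a C :: real
  assumes "\<And>s. 2 * s * a \<le> s\<^sup>2 * C"
  shows "a = 0"
proof -
  define c where "c = \<bar>C\<bar> + 1"
  define s where "s = a / c"
  have a_eq: "a = s * c" by (simp add: c_def s_def)
  have "2 * s * a * c\<^sup>2 \<le> s\<^sup>2 * C * c\<^sup>2"
    using assms[of s] by (rule mult_right_mono) simp
  then have "2 * a\<^sup>2 * c \<le> a\<^sup>2 * C"
    unfolding a_eq by (simp add: power2_eq_square algebra_simps)
  moreover have "a\<^sup>2 * C < a\<^sup>2 * (2 * c)" if "a \<noteq> 0"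
    using that by (intro mult_strict_left_mono) (auto simp: c_def)
  ultimately show ?thesis by (cases "a = 0") (auto simp: algebra_simps)
qed

lemma rayleigh_quotient_attains_max:
  fixes A B :: "real^'n^'n"
  assumes A: "pd_mat A" and V: "subspace V" "V \<noteq> {0}"
  obtains v where "v \<in> V" "v \<bullet> (A *v v) = 1"
    "\<And>x. x \<in> V \<Longrightarrow> x \<bullet> (B *v x) \<le> (v \<bullet> (B *v v)) * (x \<bullet> (A *v x))"
proof -
  define K where "K = {x \<in> V. x \<bullet> (A *v x) = 1}"
  have normalized: "inverse (sqrt (x \<bullet> (A *v x))) *\<^sub>R x \<in> K" if "x \<in> V" "x \<noteq> 0" for x
  proof -
    have "x \<bullet> (A *v x) > 0" using A that(2) by (simp add: pd_mat_def)
    then have "(inverse (sqrt (x \<bullet> (A *v x))) *\<^sub>R x) \<bullet> (A *v (inverse (sqrt (x \<bullet> (A *v x))) *\<^sub>R x)) = 1"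
      unfolding quadratic_form_scaleR by (simp add: power_inverse)
    then show ?thesis using that(1) V(1) by (simp add: K_def subspace_scale)
  qed
  obtain c where c: "c > 0" "\<And>x. c * (norm x)\<^sup>2 \<le> x \<bullet> (A *v x)" using pd_mat_coercive[OF A] by blast
  have "bounded K"
  proof -
    have "norm x \<le> 1 / sqrt c" if "x \<in> K" for x
    proof (rule power2_le_imp_le)
      show "(norm x)\<^sup>2 \<le> (1 / sqrt c)\<^sup>2"
        using c(1) c(2)[of x] that by (simp add: K_def field_simps)
    qed (use c(1) in simp)
    then show ?thesis unfolding bounded_iff by blast
  qed
  moreover have "closed K"
    unfolding K_def using closed_subspace[OF V(1)]
    by (intro continuous_closed_preimage_constant continuous_on_quadratic_form)
  moreover obtain u where "u \<in> V" "u \<noteq> 0" using V by (auto simp: subspace_0)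
  then have "K \<noteq> {}" using normalized by blast
  ultimately obtain v where v: "v \<in> K" and max: "\<forall>y\<in>K. y \<bullet> (B *v y) \<le> v \<bullet> (B *v v)"
    using continuous_attains_sup[OF _ _ continuous_on_quadratic_form[of _ B]]
    by (metis compact_eq_bounded_closed)
  have "x \<bullet> (B *v x) \<le> (v \<bullet> (B *v v)) * (x \<bullet> (A *v x))" if "x \<in> V" for x
  proof (cases "x = 0")
    case False
    have pos: "x \<bullet> (A *v x) > 0" using A False by (simp add: pd_mat_def)
    let ?y = "inverse (sqrt (x \<bullet> (A *v x))) *\<^sub>R x"
    have "?y \<bullet> (B *v ?y) \<le> v \<bullet> (B *v v)" using max normalized[OF that False] by blast
    then have "inverse (x \<bullet> (A *v x)) * (x \<bullet> (B *v x)) \<le> v \<bullet> (B *v v)"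
      unfolding quadratic_form_scaleR using pos by (simp add: power_inverse)
    then show ?thesis using pos by (simp add: field_simps)
  qed simp
  then show ?thesis using that v by (auto simp: K_def)
qed

lemma generalized_eigenvector_on_subspace:
  fixes A B :: "real^'n^'n"
  assumes A: "pd_mat A" and B: "transpose B = B" and V: "subspace V" "V \<noteq> {0}"
  obtains v lam where "v \<in> V" "v \<bullet> (A *v v) = 1"
    "\<And>w. w \<in> V \<Longrightarrow> w \<bullet> (B *v v) = lam * (w \<bullet> (A *v v))"
proof -
  obtain v where v: "v \<in> V" "v \<bullet> (A *v v) = 1"
    and max: "\<And>x. x \<in> V \<Longrightarrow> x \<bullet> (B *v x) \<le> (v \<bullet> (B *v v)) * (x \<bullet> (A *v x))"
    using rayleigh_quotient_attains_max[OF A V, where B = B] by blast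
  define lam where "lam = v \<bullet> (B *v v)"
  have A_sym: "transpose A = A" using A by (simp add: pd_mat_def)
  \<comment> \<open>first-order condition for the maximum of the Rayleigh quotient along the line v + s w\<close>
  have "w \<bullet> (B *v v) - lam * (w \<bullet> (A *v v)) = 0" if w: "w \<in> V" for w
  proof (rule linear_le_quadratic_imp_eq_0)
    fix s :: real
    have "v + s *\<^sub>R w \<in> V" using V(1) v(1) w by (simp add: subspace_add subspace_scale)
    from max[OF this] show "2 * s * (w \<bullet> (B *v v) - lam * (w \<bullet> (A *v v)))
        \<le> s\<^sup>2 * (lam * (w \<bullet> (A *v w)) - w \<bullet> (B *v w))"
      unfolding quadratic_form_add[OF B] quadratic_form_add[OF A_sym] quadratic_form_scaleR
      using v(2) by (simp add: lam_def algebra_simps)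
  qed
  then show ?thesis by (intro that[OF v, of lam]) simp
qed

lemma exists_nonzero_orthogonal_to_finite:
  fixes F :: "'a::euclidean_space set"
  assumes "finite F" "card F < DIM('a)"
  obtains u where "u \<noteq> 0" "\<And>f. f \<in> F \<Longrightarrow> u \<bullet> f = 0"
proof -
  have "dim F < DIM('a)" using assms dim_le_card' le_less_trans by blast
  then obtain u where "u \<noteq> 0" "\<And>y. y \<in> span F \<Longrightarrow> orthogonal u y"
    using orthogonal_to_subspace_exists by blast
  then show ?thesis using that by (simp add: orthogonal_def span_base)
qed

(* The last clause is the invariant that makes a generalized eigenvector chosen in the
   A-orthogonal complement of F also B-orthogonal to F. *)
definition pencil_orthonormal :: "real^'n^'n \<Rightarrow> real^'n^'n \<Rightarrow> (real^'n) set \<Rightarrow> bool" where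
  "pencil_orthonormal A B F \<longleftrightarrow>
    (\<forall>f\<in>F. \<forall>g\<in>F. f \<bullet> (A *v g) = (if f = g then 1 else 0) \<and> (f \<noteq> g \<longrightarrow> f \<bullet> (B *v g) = 0)) \<and>
    (\<forall>x. (\<forall>g\<in>F. x \<bullet> (A *v g) = 0) \<longrightarrow> (\<forall>f\<in>F. x \<bullet> (B *v f) = 0))"

lemma pencil_orthonormal_insert:
  fixes A B :: "real^'n^'n"
  assumes A: "transpose A = A" and B: "transpose B = B" and F: "pencil_orthonormal A B F"
    and v_orth: "\<forall>g\<in>F. v \<bullet> (A *v g) = 0" and v_norm: "v \<bullet> (A *v v) = 1"
    and eigen: "\<And>w. \<forall>g\<in>F. w \<bullet> (A *v g) = 0 \<Longrightarrow> w \<bullet> (B *v v) = lam * (w \<bullet> (A *v v))"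
  shows "pencil_orthonormal A B (insert v F)"
proof -
  have orth: "\<And>f g. f \<in> F \<Longrightarrow> g \<in> F \<Longrightarrow>
      f \<bullet> (A *v g) = (if f = g then 1 else 0) \<and> (f \<noteq> g \<longrightarrow> f \<bullet> (B *v g) = 0)"
    and invariant: "\<And>x f. \<forall>g\<in>F. x \<bullet> (A *v g) = 0 \<Longrightarrow> f \<in> F \<Longrightarrow> x \<bullet> (B *v f) = 0"
    using F unfolding pencil_orthonormal_def by blast+
  have v_A_orth: "v \<bullet> (A *v f) = 0" "f \<bullet> (A *v v) = 0" if "f \<in> F" for f
    using that v_orth inner_matrix_vector_mult_symmetric[OF A, of v f] by auto
  have v_B_orth: "v \<bullet> (B *v f) = 0" "f \<bullet> (B *v v) = 0" if "f \<in> F" for f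
    using invariant[OF v_orth that] inner_matrix_vector_mult_symmetric[OF B, of v f] by simp_all
  show ?thesis
    unfolding pencil_orthonormal_def
  proof (intro conjI ballI allI impI)
    show "f \<bullet> (A *v g) = (if f = g then 1 else 0)" if "f \<in> insert v F" "g \<in> insert v F" for f g
      using that orth v_norm v_A_orth by auto
    show "f \<bullet> (B *v g) = 0" if "f \<in> insert v F" "g \<in> insert v F" "f \<noteq> g" for f g
      using that orth v_B_orth by auto
    show "x \<bullet> (B *v f) = 0" if "\<forall>g\<in>insert v F. x \<bullet> (A *v g) = 0" "f \<in> insert v F" for x f
      using that eigen invariant by auto
  qed
qed

lemma pencil_orthonormal_extend:
  fixes A B :: "real^'n^'n"
  assumes A: "pd_mat A" and B: "transpose B = B"
    and F: "pencil_orthonormal A B F" "finite F" "card F < CARD('n)"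
  obtains v where "v \<notin> F" "pencil_orthonormal A B (insert v F)"
proof -
  define V where "V = {x. \<forall>g\<in>F. x \<bullet> (A *v g) = 0}"
  have "subspace V" unfolding V_def subspace_def by (simp add: inner_add_left)
  moreover have "V \<noteq> {0}"
  proof -
    have "card ((*v) A ` F) < DIM(real^'n)"
      using F(3) card_image_le[OF F(2), of "(*v) A"] by simp
    then obtain u where "u \<noteq> 0" "\<And>y. y \<in> (*v) A ` F \<Longrightarrow> u \<bullet> y = 0"
      using exists_nonzero_orthogonal_to_finite F(2) finite_imageI by blast
    then have "u \<in> V" "u \<noteq> 0" by (auto simp: V_def)
    then show ?thesis by blast
  qed
  ultimately obtain v lam where v: "v \<in> V" "v \<bullet> (A *v v) = 1"
    and eigen: "\<And>w. w \<in> V \<Longrightarrow> w \<bullet> (B *v v) = lam * (w \<bullet> (A *v v))"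
    using generalized_eigenvector_on_subspace[OF A B] by blast
  have "v \<notin> F" using v by (auto simp: V_def)
  moreover have "pencil_orthonormal A B (insert v F)"
    using A B F(1) v eigen by (intro pencil_orthonormal_insert) (auto simp: V_def pd_mat_def)
  ultimately show ?thesis by (rule that)
qed

lemma pencil_orthonormal_basis_exists:
  fixes A B :: "real^'n^'n"
  assumes A: "pd_mat A" and B: "transpose B = B"
  obtains F where "finite F" "card F = CARD('n)" "pencil_orthonormal A B F"
proof -
  have "\<exists>F. finite F \<and> card F = k \<and> pencil_orthonormal A B F" if "k \<le> CARD('n)" for k
    using that
  proof (induction k)
    case 0
    show ?case by (intro exI[of _ "{}"]) (simp add: pencil_orthonormal_def)
  next
    case (Suc k)
    then obtain F where F: "finite F" "card F = k" "pencil_orthonormal A B F" by auto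
    moreover obtain v where "v \<notin> F" "pencil_orthonormal A B (insert v F)"
      using pencil_orthonormal_extend[OF A B F(3) F(1)] F(2) Suc.prems by auto
    ultimately show ?case by (intro exI[of _ "insert v F"]) simp
  qed
  then show ?thesis using that by blast
qed

lemma simultaneous_diagonalization:
  fixes A B :: "real^'n^'n"
  assumes "pd_mat A" "transpose B = B"
  obtains P :: "real^'n^'n" where "transpose P ** A ** P = mat 1"
    "\<And>i j. i \<noteq> j \<Longrightarrow> (transpose P ** B ** P) $ i $ j = 0"
proof -
  obtain F where F: "finite F" "card F = CARD('n)" and "pencil_orthonormal A B F"
    using pencil_orthonormal_basis_exists[OF assms] by blast
  then have A_orth: "\<And>f g. f \<in> F \<Longrightarrow> g \<in> F \<Longrightarrow> f \<bullet> (A *v g) = (if f = g then 1 else 0)"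
    and B_orth: "\<And>f g. f \<in> F \<Longrightarrow> g \<in> F \<Longrightarrow> f \<noteq> g \<Longrightarrow> f \<bullet> (B *v g) = 0"
    unfolding pencil_orthonormal_def by blast+
  obtain b where b: "bij_betw b (UNIV::'n set) F"
    using finite_same_card_bij[of "UNIV::'n set" F] F by auto
  define P where "P = (\<chi> i j. b j $ i)"
  have col: "column j P = b j" for j by (simp add: P_def column_def vec_eq_iff)
  have bF: "b j \<in> F" for j using b bij_betwE by blast
  have inj: "b i = b j \<longleftrightarrow> i = j" for i j
    using b by (metis bij_betw_imp_inj_on inj_onD UNIV_I)
  have "(transpose P ** A ** P) $ i $ j = mat 1 $ i $ j" for i j
    by (simp add: congruence_nth col mat_def A_orth bF inj)
  then have "transpose P ** A ** P = mat 1" by (simp add: vec_eq_iff)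
  moreover have "(transpose P ** B ** P) $ i $ j = 0" if "i \<noteq> j" for i j
    using that by (simp add: congruence_nth col B_orth bF inj)
  ultimately show ?thesis using that by blast
qed

lemma det_congruence: "det (transpose P ** X ** P) = (det P)\<^sup>2 * det (X::real^'n^'n)"
  by (simp add: det_mul power2_eq_square)

lemma pd_mat_det_pos:
  assumes "pd_mat (A::real^'n^'n)"
  shows "det A > 0"
proof -
  have "transpose A = A" using assms by (simp add: pd_mat_def)
  then obtain P :: "real^'n^'n" where "transpose P ** A ** P = mat 1"
    using simultaneous_diagonalization[OF assms] by blast
  then have "(det P)\<^sup>2 * det A = 1" by (metis det_congruence det_I)
  show ?thesis
  proof (rule ccontr)
    assume "\<not> det A > 0"
    then have "(det P)\<^sup>2 * det A \<le> 0" by (simp add: mult_nonneg_nonpos)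
    with \<open>(det P)\<^sup>2 * det A = 1\<close> show False by simp
  qed
qed

lemma det_pencil_eq_prod:
  fixes A B :: "real^'n^'n"
  assumes A: "pd_mat A" and B: "pd_mat B"
  obtains \<beta> :: "'n \<Rightarrow> real" where "\<And>i. \<beta> i > 0"
    "\<And>s t. det (s *\<^sub>R A + t *\<^sub>R B) = det A * (\<Prod>i\<in>UNIV. s + t * \<beta> i)"
proof -
  obtain P :: "real^'n^'n" where PA: "transpose P ** A ** P = mat 1"
    and PB: "\<And>i j. i \<noteq> j \<Longrightarrow> (transpose P ** B ** P) $ i $ j = 0"
    using simultaneous_diagonalization[OF A] B by (auto simp: pd_mat_def)
  define \<beta> where "\<beta> i = (transpose P ** B ** P) $ i $ i" for i
  have det_comb: "(det P)\<^sup>2 * det (s *\<^sub>R A + t *\<^sub>R B) = (\<Prod>i\<in>UNIV. s + t * \<beta> i)" for s t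
  proof -
    have "transpose P ** (s *\<^sub>R A + t *\<^sub>R B) ** P = s *\<^sub>R mat 1 + t *\<^sub>R (transpose P ** B ** P)"
      by (simp add: PA[symmetric] matrix_add_ldistrib matrix_add_rdistrib scalar_matrix_assoc matrix_scalar_ac)
    then have "det (transpose P ** (s *\<^sub>R A + t *\<^sub>R B) ** P) = (\<Prod>i\<in>UNIV. s + t * \<beta> i)"
      by (subst det_diagonal) (auto simp: PB \<beta>_def mat_def)
    then show ?thesis by (simp add: det_congruence)
  qed
  have "(det P)\<^sup>2 * det A = 1" using det_comb[of 1 0] by simp
  then have det_pencil: "det (s *\<^sub>R A + t *\<^sub>R B) = det A * (\<Prod>i\<in>UNIV. s + t * \<beta> i)" for s t
    by (metis det_comb mult.assoc mult.commute mult_1)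
  have \<beta>_pos: "\<beta> i > 0" for i
  proof -
    have "column i P \<bullet> (A *v column i P) = 1"
      using congruence_nth[of P A i i] by (simp add: PA mat_def)
    then have "column i P \<noteq> 0" by auto
    then show ?thesis using B by (simp add: pd_mat_def \<beta>_def congruence_nth)
  qed
  show ?thesis using \<beta>_pos det_pencil by (rule that)
qed

lemma concave_on_ln_det: "concave_on {D :: real^'n^'n. pd_mat D} (\<lambda>D. ln (det D))"
  unfolding concave_on_iff
proof (intro conjI ballI allI impI)
  show "convex {D :: real^'n^'n. pd_mat D}" by (rule convex_pd_mat)
  fix A B :: "real^'n^'n" and u v :: real
  assume A: "A \<in> {D. pd_mat D}" and B: "B \<in> {D. pd_mat D}" and "0 \<le> u" "0 \<le> v" "u + v = 1"
  then have A': "pd_mat A" and B': "pd_mat B" and u_eq: "u = 1 - v" and v: "0 \<le> v" "v \<le> 1"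
    by auto
  obtain \<beta> :: "'n \<Rightarrow> real" where \<beta>_pos: "\<And>i. \<beta> i > 0"
    and det_pencil: "\<And>s t. det (s *\<^sub>R A + t *\<^sub>R B) = det A * (\<Prod>i\<in>UNIV. s + t * \<beta> i)"
    using det_pencil_eq_prod[OF A' B'] by blast
  have ln_det_pencil: "ln (det (s *\<^sub>R A + t *\<^sub>R B)) = ln (det A) + (\<Sum>i\<in>UNIV. ln (s + t * \<beta> i))"
    if "\<And>i. s + t * \<beta> i > 0" for s t
  proof -
    have "ln (det (s *\<^sub>R A + t *\<^sub>R B)) = ln (det A) + ln (\<Prod>i\<in>UNIV. s + t * \<beta> i)"
      unfolding det_pencil using pd_mat_det_pos[OF A'] that by (intro ln_mult_pos) (simp_all add: prod_pos)
    also have "ln (\<Prod>i\<in>UNIV. s + t * \<beta> i) = (\<Sum>i\<in>UNIV. ln (s + t * \<beta> i))"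
      using that by (intro ln_prod) (simp_all add: dual_order.strict_implies_not_eq)
    finally show ?thesis .
  qed
  have concave_ln: "v * ln (\<beta> i) \<le> ln ((1 - v) + v * \<beta> i)" for i
    using concave_onD[OF ln_concave, of v 1 "\<beta> i"] v \<beta>_pos[of i] by simp
  have "u * ln (det A) + v * ln (det B) = ln (det A) + v * (\<Sum>i\<in>UNIV. ln (\<beta> i))"
    using ln_det_pencil[of 0 1] \<beta>_pos by (simp add: u_eq algebra_simps)
  also have "\<dots> \<le> ln (det A) + (\<Sum>i\<in>UNIV. ln (u + v * \<beta> i))"
    using concave_ln by (simp add: u_eq sum_distrib_left sum_mono)
  also have "\<dots> = ln (det (u *\<^sub>R A + v *\<^sub>R B))"
  proof -
    have "u + v * \<beta> i > 0" for i
      using \<beta>_pos[of i] v u_eq by (cases "v = 0") (auto intro: add_nonneg_pos)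
    then show ?thesis by (simp add: ln_det_pencil)
  qed
  finally show "u * ln (det A) + v * ln (det B) \<le> ln (det (u *\<^sub>R A + v *\<^sub>R B))" .
qed

lemma matrix_inv_right:
  assumes "invertible A"
  shows "A ** matrix_inv A = mat 1"
  using assms unfolding invertible_def matrix_inv_def by (rule someI_ex[THEN conjunct1])

lemma det_matrix_inv:
  fixes A :: "real^'n^'n"
  assumes "det A \<noteq> 0"
  shows "det (matrix_inv A) = inverse (det A)"
proof -
  have "det A * det (matrix_inv A) = 1"
    using matrix_inv_right[of A] assms by (simp add: invertible_det_nz flip: det_mul)
  then show ?thesis using assms by (simp add: field_simps)
qed

lemma convex_on_ln_det_matrix_inv:
  "convex_on {D :: real^'n^'n. pd_mat D} (\<lambda>D. ln (det (matrix_inv D)))"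
  unfolding convex_on_def
proof (intro conjI ballI allI impI)
  show "convex {D :: real^'n^'n. pd_mat D}" by (rule convex_pd_mat)
  have ln_det_inv: "ln (det (matrix_inv D)) = - ln (det D)" if "pd_mat D" for D :: "real^'n^'n"
    using pd_mat_det_pos[OF that] by (simp add: det_matrix_inv ln_inverse)
  fix A B :: "real^'n^'n" and u v :: real
  assume "A \<in> {D. pd_mat D}" "B \<in> {D. pd_mat D}" "0 \<le> u" "0 \<le> v" "u + v = 1"
  moreover from this have "pd_mat (u *\<^sub>R A + v *\<^sub>R B)"
    using convexD[OF convex_pd_mat] by blast
  moreover from calculation have "u * ln (det A) + v * ln (det B) \<le> ln (det (u *\<^sub>R A + v *\<^sub>R B))"
    using concave_on_ln_det unfolding concave_on_iff by blast
  ultimately show "ln (det (matrix_inv (u *\<^sub>R A + v *\<^sub>R B)))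
      \<le> u * ln (det (matrix_inv A)) + v * ln (det (matrix_inv B))"
    by (simp add: ln_det_inv)
qed

lemma bounded_bilinear_matrix_sandwich:
  "bounded_bilinear (\<lambda>X Y :: real^'n^'n. X ** K ** Y)"
  unfolding bilinear_conv_bounded_bilinear[symmetric] bilinear_def
  by (auto intro!: linearI simp: matrix_add_ldistrib matrix_add_rdistrib
      scalar_matrix_assoc matrix_scalar_ac matrix_mul_assoc)

lemma integrable_matrix_sandwich:
  fixes S :: "'a \<Rightarrow> real^'n^'n" and K :: "real^'n^'n"
  assumes "S \<in> borel_measurable M" "integrable M (\<lambda>\<omega>. (norm (S \<omega>))\<^sup>2)"
  shows "integrable M (\<lambda>\<omega>. S \<omega> ** K ** S \<omega>)"
proof -
  note bb = bounded_bilinear_matrix_sandwich[of K]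
  obtain C where "C \<ge> 0" and C: "\<And>X Y. norm (X ** K ** Y :: real^'n^'n) \<le> norm X * norm Y * C"
    using bounded_bilinear.nonneg_bounded[OF bb] by blast
  show ?thesis
  proof (rule Bochner_Integration.integrable_bound)
    show "integrable M (\<lambda>\<omega>. C * (norm (S \<omega>))\<^sup>2)" using assms(2) by simp
    show "(\<lambda>\<omega>. S \<omega> ** K ** S \<omega>) \<in> borel_measurable M"
      using bounded_bilinear.continuous_on[OF bb continuous_on_id continuous_on_id]
      by (rule borel_measurable_continuous_on[OF _ assms(1)])
    show "AE \<omega> in M. norm (S \<omega> ** K ** S \<omega>) \<le> norm (C * (norm (S \<omega>))\<^sup>2)"
    proof (rule AE_I2)
      fix \<omega>
      show "norm (S \<omega> ** K ** S \<omega>) \<le> norm (C * (norm (S \<omega>))\<^sup>2)"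
        using C[of "S \<omega>" "S \<omega>"] \<open>C \<ge> 0\<close> by (simp add: power2_eq_square mult_ac)
    qed
  qed
qed

lemma bounded_linear_quadratic_form: "bounded_linear (\<lambda>X::real^'n^'n. x \<bullet> (X *v x))"
  unfolding linear_conv_bounded_linear[symmetric]
  by (rule linearI) (simp_all add: matrix_vector_mult_add_rdistrib inner_add_right
      scaleR_matrix_vector_assoc[symmetric])

lemma bounded_linear_transpose: "bounded_linear (transpose :: real^'n^'n \<Rightarrow> real^'n^'n)"
  unfolding linear_conv_bounded_linear[symmetric]
  by (rule linearI) (simp_all add: transpose_def vec_eq_iff)

context
  fixes M :: "'a measure" and S :: "'a \<Rightarrow> real^'n^'n"
  assumes S_measurable: "S \<in> borel_measurable M"
    and S_symmetric: "\<And>\<omega>. \<omega> \<in> space M \<Longrightarrow> transpose (S \<omega>) = S \<omega>"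
    and S_square_integrable: "integrable M (\<lambda>\<omega>. (norm (S \<omega>))\<^sup>2)"
begin

lemma transpose_integral_sandwich:
  assumes "transpose K = K"
  shows "transpose (integral\<^sup>L M (\<lambda>\<omega>. S \<omega> ** K ** S \<omega>)) = integral\<^sup>L M (\<lambda>\<omega>. S \<omega> ** K ** S \<omega>)"
proof -
  have "transpose (integral\<^sup>L M (\<lambda>\<omega>. S \<omega> ** K ** S \<omega>)) = integral\<^sup>L M (\<lambda>\<omega>. transpose (S \<omega> ** K ** S \<omega>))"
    by (rule integral_bounded_linear[OF bounded_linear_transpose
          integrable_matrix_sandwich[OF S_measurable S_square_integrable], symmetric])
  also have "\<dots> = integral\<^sup>L M (\<lambda>\<omega>. S \<omega> ** K ** S \<omega>)"
    using S_symmetric assms by (intro Bochner_Integration.integral_cong transpose_congruence) auto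
  finally show ?thesis .
qed

lemma quadratic_form_integral_sandwich:
  "x \<bullet> (integral\<^sup>L M (\<lambda>\<omega>. S \<omega> ** K ** S \<omega>) *v x) = integral\<^sup>L M (\<lambda>\<omega>. (S \<omega> *v x) \<bullet> (K *v (S \<omega> *v x)))"
proof -
  have "x \<bullet> (integral\<^sup>L M (\<lambda>\<omega>. S \<omega> ** K ** S \<omega>) *v x) = integral\<^sup>L M (\<lambda>\<omega>. x \<bullet> ((S \<omega> ** K ** S \<omega>) *v x))"
    by (rule integral_bounded_linear[OF bounded_linear_quadratic_form
          integrable_matrix_sandwich[OF S_measurable S_square_integrable], symmetric])
  also have "\<dots> = integral\<^sup>L M (\<lambda>\<omega>. (S \<omega> *v x) \<bullet> (K *v (S \<omega> *v x)))"
    using S_symmetric by (intro Bochner_Integration.integral_cong quadratic_form_congruence) auto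
  finally show ?thesis .
qed

lemma integrable_quadratic_form_sandwich:
  "integrable M (\<lambda>\<omega>. (S \<omega> *v x) \<bullet> (K *v (S \<omega> *v x)))"
proof -
  have "integrable M (\<lambda>\<omega>. x \<bullet> ((S \<omega> ** K ** S \<omega>) *v x))"
    by (rule integrable_bounded_linear[OF bounded_linear_quadratic_form
          integrable_matrix_sandwich[OF S_measurable S_square_integrable]])
  also have "?this \<longleftrightarrow> ?thesis"
    by (rule Bochner_Integration.integrable_cong) (simp_all add: S_symmetric quadratic_form_congruence)
  finally show ?thesis .
qed

lemma loewner_le_integral_sandwich_iff:
  assumes "transpose K = K" "transpose D = D"
  shows "loewner_le (integral\<^sup>L M (\<lambda>\<omega>. S \<omega> ** K ** S \<omega>)) D
    \<longleftrightarrow> (\<forall>x. integral\<^sup>L M (\<lambda>\<omega>. (S \<omega> *v x) \<bullet> (K *v (S \<omega> *v x))) \<le> x \<bullet> (D *v x))"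
  using assms
  by (simp add: loewner_le_iff_quadratic_form transpose_integral_sandwich
      quadratic_form_integral_sandwich)

lemma convex_loewner_sublevel:
  fixes L :: "real^'n^'n"
  assumes L: "psd_mat L"
  shows "convex {D. pd_mat D \<and> loewner_le (integral\<^sup>L M (\<lambda>\<omega>. S \<omega> ** D ** L ** D ** S \<omega>)) D}"
proof (rule convexI)
  fix A B :: "real^'n^'n" and u v :: real
  let ?C = "{D. pd_mat D \<and> loewner_le (integral\<^sup>L M (\<lambda>\<omega>. S \<omega> ** D ** L ** D ** S \<omega>)) D}"
  let ?q = "\<lambda>K x \<omega>. (S \<omega> *v x) \<bullet> (K *v (S \<omega> *v x))"
  assume A: "A \<in> ?C" and B: "B \<in> ?C" and u: "0 \<le> u" and v: "0 \<le> v" and uv: "u + v = 1"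
  define D where "D = u *\<^sub>R A + v *\<^sub>R B"
  have pd_sym: "transpose X = X" if "pd_mat X" for X :: "real^'n^'n"
    using that by (simp add: pd_mat_def)
  have L_sym: "transpose L = L" using L by (simp add: psd_mat_def)
  have assoc: "S \<omega> ** X ** L ** X ** S \<omega> = S \<omega> ** (X ** L ** X) ** S \<omega>" for \<omega> X
    by (simp add: matrix_mul_assoc)
  have member_iff: "X \<in> ?C \<longleftrightarrow> pd_mat X \<and> (\<forall>x. integral\<^sup>L M (?q (X ** L ** X) x) \<le> x \<bullet> (X *v x))"
    for X
    using loewner_le_integral_sandwich_iff[OF transpose_congruence[OF _ L_sym], of X X]
    by (auto simp: assoc pd_sym)
  have "pd_mat A" "pd_mat B" "pd_mat D"
    using A B convexD[OF convex_pd_mat] u v uv by (auto simp: D_def)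
  moreover have "integral\<^sup>L M (?q (D ** L ** D) x) \<le> x \<bullet> (D *v x)" for x
  proof -
    have "integral\<^sup>L M (?q (D ** L ** D) x)
        \<le> integral\<^sup>L M (\<lambda>\<omega>. u * ?q (A ** L ** A) x \<omega> + v * ?q (B ** L ** B) x \<omega>)"
      using \<open>pd_mat A\<close> \<open>pd_mat B\<close> unfolding D_def
      by (intro integral_mono Bochner_Integration.integrable_add integrable_mult_right
          integrable_quadratic_form_sandwich quadratic_form_sandwich_convex L u v uv pd_sym)
    also have "\<dots> = u * integral\<^sup>L M (?q (A ** L ** A) x) + v * integral\<^sup>L M (?q (B ** L ** B) x)"
      by (simp add: integrable_quadratic_form_sandwich)
    also have "\<dots> \<le> u * (x \<bullet> (A *v x)) + v * (x \<bullet> (B *v x))"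
      using A B u v unfolding member_iff by (intro add_mono mult_left_mono) auto
    also have "\<dots> = x \<bullet> (D *v x)"
      by (simp add: D_def quadratic_form_matrix_combination)
    finally show ?thesis .
  qed
  ultimately show "u *\<^sub>R A + v *\<^sub>R B \<in> ?C" unfolding member_iff D_def by blast
qed

end

theorem proposition1:
  fixes M :: "'a measure" and S :: "'a \<Rightarrow> real^'n^'n" and L :: "real^'n^'n"
  assumes "prob_space M"
    and "psd_mat L"
    and "S \<in> borel_measurable M"
    and "\<forall>\<omega>\<in>space M. psd_mat (S \<omega>)"
    and "integrable M (\<lambda>\<omega>. (norm (S \<omega>))^2)"
    and "integral\<^sup>L M S = mat 1"
  shows "convex_on {D :: real^'n^'n. pd_mat D} (\<lambda>D. ln (det (matrix_inv D)))
         \<and> convex {D. pd_mat D \<and>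
              loewner_le (integral\<^sup>L M (\<lambda>\<omega>. S \<omega> ** D ** L ** D ** S \<omega>)) D}"
proof
  show "convex_on {D :: real^'n^'n. pd_mat D} (\<lambda>D. ln (det (matrix_inv D)))"
    by (rule convex_on_ln_det_matrix_inv)
  have "\<And>\<omega>. \<omega> \<in> space M \<Longrightarrow> transpose (S \<omega>) = S \<omega>"
    using assms(4) by (simp add: psd_mat_def)
  from convex_loewner_sublevel[OF assms(3) this assms(5) assms(2)]
  show "convex {D. pd_mat D \<and> loewner_le (integral\<^sup>L M (\<lambda>\<omega>. S \<omega> ** D ** L ** D ** S \<omega>)) D}" .
qed

end
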